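(* Let $1\le m\le N$ be integers and let $u$ be a finite (real-valued) function on $\Lambda^m$. Then $G_{N,m}u=0$ $d^Nx$-a.e. on $\Lambda^N$ if and only if $u=0$ $d^mx$-a.e. on $\Lambda^m$. In particular, $G_{N,m}$, viewed as a linear operator on classes of functions modulo a.e. equality, is injective.
   Context: $(\Lambda;dx)$ is a complete $\sigma$-finite measure space with non-zero measure $dx$; for $k\in\mathbb N$, $d^kx$ denotes the completion of the product measure $dx^{\otimes k}$ on $\Lambda^k$. For integers $1\le m\le N$ and a function $u:\Lambda^m\to\mathbb R$ (not assumed symmetric), $$(G_{N,m}u)(x_1,\dots,x_N)=\binom{N}{m}^{-1}\sum_{1\le i_1<\cdots<i_m\le N}u(x_{i_1},\dots,x_{i_m}).$$ *)

theory Defs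
  imports "HOL-Analysis.Analysis" "HOL-Probability.Probability"
begin

text \<open>Lambda^k with measure d^k x: completion of the k-fold product measure.
  Points of Lambda^k are (extensional) functions on {..<k}.\<close>
definition prodM :: "'a measure \<Rightarrow> nat \<Rightarrow> (nat \<Rightarrow> 'a) measure" where
  "prodM M k = completion (PiM {..<k} (\<lambda>_. M))"

definition G :: "nat \<Rightarrow> nat \<Rightarrow> ((nat \<Rightarrow> 'a) \<Rightarrow> real) \<Rightarrow> (nat \<Rightarrow> 'a) \<Rightarrow> real" where
  "G N m u x = (1 / real (N choose m)) *
     (\<Sum>S\<in>{S. S \<subseteq> {..<N} \<and> card S = m}.
        u (\<lambda>j\<in>{..<m}. x (sorted_list_of_set S ! j)))"

end

theory Submission
  imports Defs
begin

text \<open>Write a point of \<open>\<Lambda>\<^sup>n\<close> as \<open>(z, t)\<close>, splitting off the last coordinate. A positive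
  combination \<open>\<Phi>\<close> of the values of \<open>v\<close> on the \<open>k\<close>-element subtuples then splits as
  \<open>A z + B\<^sub>t z\<close>, where \<open>B\<^sub>t\<close> is a positive combination over \<open>(k-1)\<close>-element
  subtuples of \<open>v(\<cdot>, t)\<close>. If \<open>\<Phi> = 0\<close> a.e., then \<open>B\<^sub>t - B\<^sub>t\<^sub>0 = 0\<close> a.e. for a.e. \<open>t\<close>
  and a fixed good \<open>t\<^sub>0\<close>, so by induction on \<open>k\<close> the function \<open>v\<close> does not depend on its
  last variable. Then \<open>\<Phi>\<close> collapses to a positive combination over \<open>(k-1)\<close>-element subtuples
  of \<open>v(\<cdot>, t\<^sub>0)\<close> in which the last coordinate of the point no longer occurs, and induction
  gives \<open>v(\<cdot>, t\<^sub>0) = 0\<close> a.e. The operator \<open>G\<close> is the case of constant weights.\<close>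

abbreviation ksubsets :: "nat \<Rightarrow> nat \<Rightarrow> nat set set" where
  "ksubsets n k \<equiv> {S. S \<subseteq> {..<n} \<and> card S = k}"

lemma finite_ksubsets: "finite (ksubsets n k)"
  by (rule finite_subset[of _ "Pow {..<n}"]) auto

definition subtuple :: "nat set \<Rightarrow> (nat \<Rightarrow> 'a) \<Rightarrow> nat \<Rightarrow> 'a" where
  "subtuple S x = (\<lambda>j\<in>{..<card S}. x (sorted_list_of_set S ! j))"

definition subtuple_sum ::
    "nat \<Rightarrow> nat \<Rightarrow> (nat set \<Rightarrow> real) \<Rightarrow> ((nat \<Rightarrow> 'a) \<Rightarrow> real) \<Rightarrow> (nat \<Rightarrow> 'a) \<Rightarrow> real" where
  "subtuple_sum n k a v x = (\<Sum>S\<in>ksubsets n k. a S * v (subtuple S x))"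

lemma G_eq_subtuple_sum: "G N m u x = subtuple_sum N m (\<lambda>_. 1 / real (N choose m)) u x"
  unfolding G_def subtuple_sum_def subtuple_def sum_distrib_left
  by (auto intro!: sum.cong arg_cong[where f=u])

lemma subtuple_lessThan: "subtuple {..<k} y = restrict y {..<k}"
  by (auto simp: subtuple_def lessThan_atLeast0 intro!: restrict_ext)

lemma sorted_list_of_set_insert_greater:
  assumes "finite R" "\<forall>r\<in>R. r < (j::nat)"
  shows "sorted_list_of_set (insert j R) = sorted_list_of_set R @ [j]"
proof -
  have "sorted (sorted_list_of_set R @ [j])" "distinct (sorted_list_of_set R @ [j])"
    "set (sorted_list_of_set R @ [j]) = insert j R"
    using assms by (auto simp: sorted_append less_imp_le)
  then show ?thesis
    by (metis sorted_list_of_set.idem_if_sorted_distinct)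
qed

lemma subtuple_insert_greater:
  assumes "finite R" "\<forall>r\<in>R. r < (j::nat)"
  shows "subtuple (insert j R) x = (subtuple R x)(card R := x j)"
  using assms unfolding subtuple_def sorted_list_of_set_insert_greater[OF assms]
  by (auto simp: nth_append fun_eq_iff less_Suc_eq)

lemma subtuple_cong:
  assumes "finite S" "\<And>i. i \<in> S \<Longrightarrow> x i = y i"
  shows "subtuple S x = subtuple S y"
  unfolding subtuple_def using assms
  by (auto simp: fun_eq_iff intro!: assms(2))
    (metis nth_mem sorted_list_of_set.length_sorted_key_list_of_set
      sorted_list_of_set.set_sorted_key_list_of_set)

lemma subtuple_fun_upd_notin: "finite S \<Longrightarrow> i \<notin> S \<Longrightarrow> subtuple S (x(i := t)) = subtuple S x"
  by (intro subtuple_cong) auto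

lemma subtuple_sum_fun_upd_out: "subtuple_sum n k a v (z(n := t)) = subtuple_sum n k a v z"
  unfolding subtuple_sum_def
  by (intro sum.cong refl arg_cong2[where f="(*)"] arg_cong[where f=v] subtuple_fun_upd_notin)
    (auto intro: finite_subset)

lemma subtuple_sum_diff:
  "subtuple_sum n k a (\<lambda>w. f w - g w) x = subtuple_sum n k a f x - subtuple_sum n k a g x"
  unfolding subtuple_sum_def by (simp add: sum_subtractf right_diff_distrib)

lemma subtuple_sum_0: "subtuple_sum n 0 a v x = a {} * v (\<lambda>_. undefined)"
proof -
  have "ksubsets n 0 = {{}}"
    by (auto dest: finite_subset)
  then show ?thesis by (simp add: subtuple_sum_def subtuple_def restrict_def)
qed

lemma ksubsets_Suc:
  "ksubsets (Suc n) (Suc k) = ksubsets n (Suc k) \<union> insert n ` ksubsets n k"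
proof (intro equalityI subsetI)
  fix S assume S: "S \<in> ksubsets (Suc n) (Suc k)"
  show "S \<in> ksubsets n (Suc k) \<union> insert n ` ksubsets n k"
  proof (cases "n \<in> S")
    case True
    have "finite S" using S finite_subset by auto
    then have "S - {n} \<in> ksubsets n k" using S True by (auto simp: less_Suc_eq)
    moreover have "S = insert n (S - {n})" using True by auto
    ultimately show ?thesis by blast
  next
    case False
    then show ?thesis using S by (auto simp: less_Suc_eq)
  qed
next
  fix S assume "S \<in> ksubsets n (Suc k) \<union> insert n ` ksubsets n k"
  then show "S \<in> ksubsets (Suc n) (Suc k)"
  proof
    assume "S \<in> insert n ` ksubsets n k"
    then obtain T where T: "T \<in> ksubsets n k" "S = insert n T" by auto
    then have "finite T" "n \<notin> T" using finite_subset by auto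
    then show ?thesis using T by auto
  qed auto
qed

lemma subtuple_sum_Suc_fun_upd:
  "subtuple_sum (Suc n) (Suc k) a v (z(n := t))
     = subtuple_sum n (Suc k) a v z + subtuple_sum n k (\<lambda>T. a (insert n T)) (\<lambda>w. v (w(k := t))) z"
proof -
  have disj: "ksubsets n (Suc k) \<inter> insert n ` ksubsets n k = {}" by auto
  have inj: "inj_on (insert n) (ksubsets n k)"
    by (rule inj_onI) (metis Diff_insert_absorb lessThan_iff less_irrefl mem_Collect_eq subsetD)
  have old: "subtuple S (z(n := t)) = subtuple S z" if "S \<in> ksubsets n (Suc k)" for S
    using that finite_subset[of S "{..<n}"] by (intro subtuple_fun_upd_notin) auto
  have new: "subtuple (insert n T) (z(n := t)) = (subtuple T z)(k := t)" if T: "T \<in> ksubsets n k" for T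
  proof -
    have "finite T" "\<forall>r\<in>T. r < n" using T finite_subset by auto
    then show ?thesis
      using T subtuple_insert_greater[of T n "z(n := t)"] subtuple_fun_upd_notin[of T n z t] by auto
  qed
  have "subtuple_sum (Suc n) (Suc k) a v (z(n := t))
      = (\<Sum>S\<in>ksubsets n (Suc k). a S * v (subtuple S (z(n := t))))
        + (\<Sum>T\<in>ksubsets n k. a (insert n T) * v (subtuple (insert n T) (z(n := t))))"
    unfolding subtuple_sum_def ksubsets_Suc
      sum.union_disjoint[OF finite_ksubsets finite_imageI[OF finite_ksubsets] disj]
    by (simp add: sum.reindex[OF inj])
  also have "\<dots> = subtuple_sum n (Suc k) a v z
      + subtuple_sum n k (\<lambda>T. a (insert n T)) (\<lambda>w. v (w(k := t))) z"
    unfolding subtuple_sum_def by (intro arg_cong2[where f="(+)"] sum.cong) (simp_all add: old new)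
  finally show ?thesis .
qed

lemma insert_greater_in_ksubsets:
  assumes "R \<in> ksubsets n k" "j < Suc n" "\<forall>r\<in>R. r < j"
  shows "insert j R \<in> ksubsets (Suc n) (Suc k)"
proof -
  have "finite R" "j \<notin> R" using assms finite_subset by auto
  then show ?thesis using assms by auto
qed

lemma bij_betw_insert_greater_ksubsets:
  "bij_betw (\<lambda>(R, j). insert j R)
     (SIGMA R:ksubsets n k. {j. j < Suc n \<and> (\<forall>r\<in>R. r < j)}) (ksubsets (Suc n) (Suc k))"
proof (rule bij_betw_byWitness[where f'="\<lambda>S. (S - {Max S}, Max S)"])
  show "\<forall>p\<in>SIGMA R:ksubsets n k. {j. j < Suc n \<and> (\<forall>r\<in>R. r < j)}.
      (\<lambda>S. (S - {Max S}, Max S)) ((\<lambda>(R, j). insert j R) p) = p"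
  proof
    fix p assume "p \<in> (SIGMA R:ksubsets n k. {j. j < Suc n \<and> (\<forall>r\<in>R. r < j)})"
    then obtain R j where p: "p = (R, j)" and R: "R \<subseteq> {..<n}" and less: "\<forall>r\<in>R. r < j"
      by auto
    then have "finite R" using finite_subset by blast
    then have "Max (insert j R) = j" using less by (simp add: Max_insert2 less_imp_le)
    moreover have "insert j R - {j} = R" using less by auto
    ultimately show "(\<lambda>S. (S - {Max S}, Max S)) ((\<lambda>(R, j). insert j R) p) = p" using p by simp
  qed
  show "\<forall>S\<in>ksubsets (Suc n) (Suc k). (\<lambda>(R, j). insert j R) ((\<lambda>S. (S - {Max S}, Max S)) S) = S"
  proof clarify
    fix S :: "nat set" assume "S \<subseteq> {..<Suc n}" "card S = Suc k"
    then have "Max S \<in> S" using finite_subset by (intro Max_in) auto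
    then show "insert (Max S) (S - {Max S}) = S" by auto
  qed
  show "(\<lambda>(R, j). insert j R) ` (SIGMA R:ksubsets n k. {j. j < Suc n \<and> (\<forall>r\<in>R. r < j)})
      \<subseteq> ksubsets (Suc n) (Suc k)"
  proof
    fix S assume "S \<in> (\<lambda>(R, j). insert j R) ` (SIGMA R:ksubsets n k. {j. j < Suc n \<and> (\<forall>r\<in>R. r < j)})"
    then obtain R j where "R \<in> ksubsets n k" "j < Suc n" "\<forall>r\<in>R. r < j" "S = insert j R"
      by auto
    then show "S \<in> ksubsets (Suc n) (Suc k)" by (simp only: insert_greater_in_ksubsets)
  qed
  show "(\<lambda>S. (S - {Max S}, Max S)) ` ksubsets (Suc n) (Suc k)
      \<subseteq> (SIGMA R:ksubsets n k. {j. j < Suc n \<and> (\<forall>r\<in>R. r < j)})"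
  proof
    fix p assume "p \<in> (\<lambda>S. (S - {Max S}, Max S)) ` ksubsets (Suc n) (Suc k)"
    then obtain S where S: "S \<subseteq> {..<Suc n}" "card S = Suc k" and p: "p = (S - {Max S}, Max S)"
      by auto
    then have fin: "finite S" and "S \<noteq> {}" using finite_subset by auto
    then have Max: "Max S \<in> S" and less: "\<forall>r\<in>S - {Max S}. r < Max S"
      by (auto intro: le_neq_implies_less)
    have "S - {Max S} \<subseteq> {..<n}"
    proof
      fix r assume "r \<in> S - {Max S}"
      then have "r < Max S" "Max S < Suc n" using less Max S by auto
      then show "r \<in> {..<n}" by simp
    qed
    then show "p \<in> (SIGMA R:ksubsets n k. {j. j < Suc n \<and> (\<forall>r\<in>R. r < j)})"
      using p S Max less fin by auto
  qed
qed

lemma subtuple_sum_restrict_lessThan: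
  "subtuple_sum (Suc n) (Suc k) a (\<lambda>y. w (restrict y {..<k})) x
   = subtuple_sum n k (\<lambda>R. \<Sum>j | j < Suc n \<and> (\<forall>r\<in>R. r < j). a (insert j R)) w x"
proof -
  have "a (insert j R) * w (restrict (subtuple (insert j R) x) {..<k})
      = a (insert j R) * w (subtuple R x)"
    if "R \<in> ksubsets n k" "\<forall>r\<in>R. r < j" for R j
  proof -
    have "finite R" "card R = k" using that finite_subset by auto
    moreover have "restrict ((subtuple R x)(k := x j)) {..<k} = subtuple R x"
      using that by (auto simp: fun_eq_iff subtuple_def)
    ultimately show ?thesis
      using that subtuple_insert_greater[of R j x] by simp
  qed
  then have "subtuple_sum (Suc n) (Suc k) a (\<lambda>y. w (restrict y {..<k})) x
      = (\<Sum>(R, j)\<in>(SIGMA R:ksubsets n k. {j. j < Suc n \<and> (\<forall>r\<in>R. r < j)}).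
           a (insert j R) * w (subtuple R x))"
    unfolding subtuple_sum_def sum.reindex_bij_betw[OF bij_betw_insert_greater_ksubsets, symmetric]
    by (intro sum.cong) auto
  also have "\<dots> = subtuple_sum n k (\<lambda>R. \<Sum>j | j < Suc n \<and> (\<forall>r\<in>R. r < j). a (insert j R)) w x"
    unfolding subtuple_sum_def
    by (subst sum.Sigma[symmetric]) (auto simp: finite_ksubsets sum_distrib_right)
  finally show ?thesis .
qed

lemma sum_insert_greater_pos:
  fixes a :: "nat set \<Rightarrow> real"
  assumes "\<forall>S\<in>ksubsets (Suc n) (Suc k). 0 < a S" "R \<in> ksubsets n k"
  shows "0 < (\<Sum>j | j < Suc n \<and> (\<forall>r\<in>R. r < j). a (insert j R))"
proof (intro sum_pos)
  show "{j. j < Suc n \<and> (\<forall>r\<in>R. r < j)} \<noteq> {}" using assms(2) by auto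
  show "0 < a (insert j R)" if "j \<in> {j. j < Suc n \<and> (\<forall>r\<in>R. r < j)}" for j
  proof -
    have "insert j R \<in> ksubsets (Suc n) (Suc k)"
      using that assms(2) by (intro insert_greater_in_ksubsets) auto
    then show ?thesis using assms(1) by blast
  qed
qed auto

lemma AE_const_iff:
  assumes "emeasure M (space M) \<noteq> 0"
  shows "(AE x in M. P) \<longleftrightarrow> P"
  using assms by (intro eventually_const) (simp add: trivial_limit_def[symmetric] ae_filter_eq_bot_iff)

lemma AE_imp_ex_in_space:
  assumes "emeasure M (space M) \<noteq> 0" "AE x in M. P x"
  shows "\<exists>x\<in>space M. P x"
proof -
  have "AE x in M. x \<in> space M \<and> P x" using AE_space assms(2) by eventually_elim simp
  then show ?thesis using assms(1) eventually_happens'[of "ae_filter M"] ae_filter_eq_bot_iff by blast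
qed

lemma (in sigma_finite_measure) pred_AE_snd:
  assumes "Measurable.pred (N \<Otimes>\<^sub>M M) (\<lambda>p. Q (fst p) (snd p))"
  shows "Measurable.pred N (\<lambda>w. AE t in M. Q w t)"
proof -
  let ?B = "{p \<in> space (N \<Otimes>\<^sub>M M). \<not> Q (fst p) (snd p)}"
  have B: "?B \<in> sets (N \<Otimes>\<^sub>M M)" using assms by (simp add: pred_def set_diff_eq[symmetric] sets.Diff)
  have eq: "(AE t in M. Q w t) \<longleftrightarrow> emeasure M (Pair w -` ?B) = 0" if "w \<in> space N" for w
  proof -
    have "Pair w -` ?B = {t \<in> space M. \<not> Q w t}" using that by (auto simp: space_pair_measure)
    then show ?thesis using sets_Pair1[OF B, of w] by (simp add: AE_iff_measurable[OF _ refl])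
  qed
  have "Measurable.pred N (\<lambda>w. emeasure M (Pair w -` ?B) = 0)"
    using measurable_emeasure_Pair[OF B] by measurable
  then show ?thesis by (rule measurable_cong[THEN iffD1, rotated]) (simp add: eq)
qed

locale nonnull_sigma_finite_measure = sigma_finite_measure M for M :: "'a measure" +
  assumes emeasure_space_nonzero: "emeasure M (space M) \<noteq> 0"
begin

abbreviation Mpow :: "nat \<Rightarrow> (nat \<Rightarrow> 'a) measure" where
  "Mpow n \<equiv> PiM {..<n} (\<lambda>_. M)"

lemma product_sigma_finite_M: "product_sigma_finite (\<lambda>_::nat. M)"
  unfolding product_sigma_finite_def using sigma_finite_measure_axioms by simp

lemma finite_product_sigma_finite_Mpow: "finite_product_sigma_finite (\<lambda>_. M) {..<n::nat}"
  unfolding finite_product_sigma_finite_def finite_product_sigma_finite_axioms_def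
  using product_sigma_finite_M by simp

lemma pair_sigma_finite_Mpow: "pair_sigma_finite (Mpow n) M"
  unfolding pair_sigma_finite_def
  using product_sigma_finite.sigma_finite[OF product_sigma_finite_M, of "{..<n}"]
    sigma_finite_measure_axioms
  by simp

lemma emeasure_space_Mpow_nonzero: "emeasure (Mpow n) (space (Mpow n)) \<noteq> 0"
proof -
  interpret finite_product_sigma_finite "\<lambda>_. M" "{..<n}" by (rule finite_product_sigma_finite_Mpow)
  show ?thesis using emeasure_space_nonzero by (simp add: space_PiM measure_times)
qed

lemma measurable_fun_upd_pair: "(\<lambda>p. (fst p)(n := snd p)) \<in> measurable (Mpow n \<Otimes>\<^sub>M M) (Mpow (Suc n))"
  using measurable_fun_upd[where J="{..<n}" and I="{..<Suc n}" and f=fst and h=snd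
      and N="Mpow n \<Otimes>\<^sub>M M" and M="\<lambda>_. M" and i=n]
  by (auto simp: lessThan_Suc)

lemma measurable_fun_upd_const: "t \<in> space M \<Longrightarrow> (\<lambda>w. w(n := t)) \<in> measurable (Mpow n) (Mpow (Suc n))"
  using measurable_fun_upd[where J="{..<n}" and I="{..<Suc n}" and f="\<lambda>w. w" and h="\<lambda>_. t"
      and N="Mpow n" and M="\<lambda>_. M" and i=n]
  by (auto simp: lessThan_Suc)

lemma distr_fun_upd_Mpow: "distr (Mpow n \<Otimes>\<^sub>M M) (Mpow (Suc n)) (\<lambda>p. (fst p)(n := snd p)) = Mpow (Suc n)"
proof (rule product_sigma_finite.PiM_eqI[OF product_sigma_finite_M])
  interpret F: finite_product_sigma_finite "\<lambda>_. M" "{..<n}" by (rule finite_product_sigma_finite_Mpow)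
  fix A assume A: "\<And>i. i \<in> {..<Suc n} \<Longrightarrow> A i \<in> sets M"
  have "(\<lambda>p. (fst p)(n := snd p)) -` Pi\<^sub>E {..<Suc n} A \<inter> space (Mpow n \<Otimes>\<^sub>M M) = Pi\<^sub>E {..<n} A \<times> A n"
  proof (intro set_eqI iffI)
    fix p assume "p \<in> (\<lambda>p. (fst p)(n := snd p)) -` Pi\<^sub>E {..<Suc n} A \<inter> space (Mpow n \<Otimes>\<^sub>M M)"
    then obtain x y where p: "p = (x, y)" "x \<in> Pi\<^sub>E {..<n} (\<lambda>_. space M)"
      and upd: "x(n := y) \<in> Pi\<^sub>E {..<Suc n} A"
      by (auto simp: space_pair_measure space_PiM)
    have "x i \<in> A i" if "i < n" for i
      using upd that by (auto simp: PiE_iff dest!: bspec[of _ _ i])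
    moreover have "y \<in> A n"
      using upd by (auto simp: PiE_iff dest!: bspec[of _ _ n])
    ultimately show "p \<in> Pi\<^sub>E {..<n} A \<times> A n"
      using p by (auto simp: PiE_iff)
  next
    fix p assume "p \<in> Pi\<^sub>E {..<n} A \<times> A n"
    then show "p \<in> (\<lambda>p. (fst p)(n := snd p)) -` Pi\<^sub>E {..<Suc n} A \<inter> space (Mpow n \<Otimes>\<^sub>M M)"
      using A[THEN sets.sets_into_space]
      by (auto simp: space_pair_measure space_PiM lessThan_Suc intro!: PiE_fun_upd PiE_mono)
  qed
  moreover have "Pi\<^sub>E {..<Suc n} A \<in> sets (Mpow (Suc n))" "Pi\<^sub>E {..<n} A \<in> sets (Mpow n)"
    and "A n \<in> sets M"
    using A by (auto intro!: sets_PiM_I_finite)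
  ultimately have "emeasure (distr (Mpow n \<Otimes>\<^sub>M M) (Mpow (Suc n)) (\<lambda>p. (fst p)(n := snd p)))
        (Pi\<^sub>E {..<Suc n} A)
      = emeasure (Mpow n \<Otimes>\<^sub>M M) (Pi\<^sub>E {..<n} A \<times> A n)"
    by (simp add: emeasure_distr[OF measurable_fun_upd_pair])
  also have "\<dots> = (\<Prod>i\<in>{..<n}. emeasure M (A i)) * emeasure M (A n)"
    using emeasure_pair_measure_Times[OF \<open>Pi\<^sub>E {..<n} A \<in> sets (Mpow n)\<close> \<open>A n \<in> sets M\<close>]
      F.measure_times[of A] A
    by simp
  finally show "emeasure (distr (Mpow n \<Otimes>\<^sub>M M) (Mpow (Suc n)) (\<lambda>p. (fst p)(n := snd p)))
        (Pi\<^sub>E {..<Suc n} A)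
      = (\<Prod>i\<in>{..<Suc n}. emeasure M (A i))"
    by simp
qed auto

lemma AE_Mpow_Suc_iff:
  assumes "Measurable.pred (Mpow (Suc n)) Q"
  shows "(AE x in Mpow (Suc n). Q x) \<longleftrightarrow> (AE z in Mpow n. AE t in M. Q (z(n := t)))"
proof -
  interpret pair_sigma_finite "Mpow n" M by (rule pair_sigma_finite_Mpow)
  have "Measurable.pred (Mpow n \<Otimes>\<^sub>M M) (\<lambda>p. Q ((fst p)(n := snd p)))"
    using measurable_compose[OF measurable_fun_upd_pair assms] by (simp add: comp_def)
  then have "(AE z in Mpow n. AE t in M. Q (z(n := t)))
      \<longleftrightarrow> (AE p in Mpow n \<Otimes>\<^sub>M M. Q ((fst p)(n := snd p)))"
    by (intro AE_pair_iff) (simp add: pred_def)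
  also have "\<dots> \<longleftrightarrow> (AE x in distr (Mpow n \<Otimes>\<^sub>M M) (Mpow (Suc n)) (\<lambda>p. (fst p)(n := snd p)). Q x)"
    using assms by (intro AE_distr_iff[symmetric] measurable_fun_upd_pair) (simp add: pred_def)
  also have "\<dots> \<longleftrightarrow> (AE x in Mpow (Suc n). Q x)"
    by (simp only: distr_fun_upd_Mpow)
  finally show ?thesis ..
qed

lemma measurable_subtuple:
  assumes "S \<subseteq> {..<n}"
  shows "subtuple S \<in> measurable (Mpow n) (Mpow (card S))"
  unfolding subtuple_def
proof (rule measurable_restrict)
  fix j assume "j \<in> {..<card S}"
  then have "sorted_list_of_set S ! j \<in> S"
    using assms finite_subset
    by (metis lessThan_iff nth_mem finite_lessThan sorted_list_of_set.length_sorted_key_list_of_set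
        sorted_list_of_set.set_sorted_key_list_of_set)
  then show "(\<lambda>x. x (sorted_list_of_set S ! j)) \<in> measurable (Mpow n) M"
    using assms by (intro measurable_component_singleton) auto
qed

lemma measurable_subtuple_sum:
  assumes "v \<in> borel_measurable (Mpow k)" "n \<le> m"
  shows "subtuple_sum n k a v \<in> borel_measurable (Mpow m)"
  unfolding subtuple_sum_def
proof (rule borel_measurable_sum)
  fix S assume "S \<in> ksubsets n k"
  then have S: "S \<subseteq> {..<m}" "card S = k" using assms(2) by auto
  then have "(\<lambda>x. v (subtuple S x)) \<in> borel_measurable (Mpow m)"
    using measurable_compose[OF measurable_subtuple[OF S(1)]] assms(1) by (simp add: comp_def)
  then show "(\<lambda>x. a S * v (subtuple S x)) \<in> borel_measurable (Mpow m)" by measurable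
qed

lemma AE_subtuple_pred:
  assumes "S \<subseteq> {..<n}" "Measurable.pred (Mpow (card S)) Q" "AE y in Mpow (card S). Q y"
  shows "AE x in Mpow n. Q (subtuple S x)"
  using assms
proof (induction n arbitrary: S Q)
  case (0 S Q)
  then have "S = {}" by auto
  have "AE y in Mpow 0. Q y" using 0(3) \<open>S = {}\<close> by (metis card.empty)
  moreover have "AE y in Mpow 0. y = (\<lambda>_. undefined)"
    using AE_space[of "Mpow 0"] by (simp add: space_PiM)
  ultimately have "AE y in Mpow 0. Q (\<lambda>_. undefined)" by (rule eventually_elim2) simp
  then have "Q (\<lambda>_. undefined)" by (simp add: AE_const_iff[OF emeasure_space_Mpow_nonzero])
  then show ?case by (simp add: \<open>S = {}\<close> subtuple_def)
next
  case (Suc n S Q)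
  have fin: "finite S" using Suc.prems(1) finite_subset by blast
  have "Measurable.pred (Mpow (Suc n)) (\<lambda>x. Q (subtuple S x))"
    using measurable_compose[OF measurable_subtuple[OF Suc.prems(1)] Suc.prems(2)]
    by (simp add: comp_def)
  moreover have "AE z in Mpow n. AE t in M. Q (subtuple S (z(n := t)))"
  proof (cases "n \<in> S")
    case False
    then have "S \<subseteq> {..<n}" using Suc.prems(1) by (auto simp: less_Suc_eq)
    then have "AE z in Mpow n. Q (subtuple S z)" using Suc.IH Suc.prems(2,3) by blast
    then show ?thesis
      by eventually_elim
        (simp add: subtuple_fun_upd_notin[OF fin False] AE_const_iff[OF emeasure_space_nonzero])
  next
    case True
    define R where "R = S - {n}"
    have S: "S = insert n R" and R: "R \<subseteq> {..<n}" "\<forall>r\<in>R. r < n" "finite R"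
      using True Suc.prems(1) fin by (auto simp: R_def less_Suc_eq)
    have card_S: "card S = Suc (card R)"
      unfolding R_def using fin True by (rule card_Suc_Diff1[symmetric])
    have subtuple_S: "subtuple S (z(n := t)) = (subtuple R z)(card R := t)" for z t
      using subtuple_insert_greater[OF R(3,2), of "z(n := t)"] subtuple_fun_upd_notin[OF R(3), of n z t]
        S R(2)
      by auto
    have pred_Q: "Measurable.pred (Mpow (Suc (card R))) Q" using Suc.prems(2) card_S by simp
    have "Measurable.pred (Mpow (card R) \<Otimes>\<^sub>M M) (\<lambda>p. Q ((fst p)(card R := snd p)))"
      using measurable_compose[OF measurable_fun_upd_pair pred_Q] by (simp add: comp_def)
    then have "Measurable.pred (Mpow (card R)) (\<lambda>w. AE t in M. Q (w(card R := t)))"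
      using pred_AE_snd[where N="Mpow (card R)" and Q="\<lambda>w t. Q (w(card R := t))"] by simp
    moreover have "AE w in Mpow (card R). AE t in M. Q (w(card R := t))"
      using Suc.prems(3) AE_Mpow_Suc_iff[OF pred_Q] card_S by metis
    ultimately have "AE z in Mpow n. AE t in M. Q ((subtuple R z)(card R := t))"
      using Suc.IH[OF R(1)] by blast
    then show ?thesis by (simp add: subtuple_S)
  qed
  ultimately show ?case by (simp add: AE_Mpow_Suc_iff)
qed

lemma AE_subtuple:
  assumes "S \<subseteq> {..<n}" "AE y in Mpow (card S). Q y"
  shows "AE x in Mpow n. Q (subtuple S x)"
proof -
  obtain B where B: "{y \<in> space (Mpow (card S)). \<not> Q y} \<subseteq> B" "B \<in> sets (Mpow (card S))"
    "emeasure (Mpow (card S)) B = 0"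
    using assms(2) by (auto elim: AE_E)
  have "AE x in Mpow n. subtuple S x \<notin> B"
    using B(2,3) by (intro AE_subtuple_pred[OF assms(1)] AE_not_in)
      (auto simp: pred_def sets.Diff set_diff_eq[symmetric])
  then show ?thesis
    using AE_space
    by eventually_elim (use B(1) measurable_space[OF measurable_subtuple[OF assms(1)]] in blast)
qed

lemma AE_all_subtuples:
  assumes "AE y in Mpow k. Q y"
  shows "AE x in Mpow n. \<forall>S\<in>ksubsets n k. Q (subtuple S x)"
  using assms by (intro AE_finite_allI[OF finite_ksubsets] AE_subtuple) auto

lemma AE_eq_fun_upd_restrict:
  fixes v :: "(nat \<Rightarrow> 'a) \<Rightarrow> real"
  assumes v: "v \<in> borel_measurable (Mpow (Suc k))" and t0: "t0 \<in> space M"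
    and eq: "AE t in M. AE w in Mpow k. v (w(k := t)) = v (w(k := t0))"
  shows "AE y in Mpow (Suc k). v y = v ((restrict y {..<k})(k := t0))"
proof -
  interpret P: pair_sigma_finite "Mpow k" M by (rule pair_sigma_finite_Mpow)
  have restrict_eq: "restrict w {..<k} = w" if "w \<in> space (Mpow k)" for w
    using that by (simp add: space_PiM PiE_def extensional_restrict)
  have v_t0: "(\<lambda>w. v (w(k := t0))) \<in> borel_measurable (Mpow k)"
    using measurable_compose[OF measurable_fun_upd_const[OF t0] v] by (simp add: comp_def)
  have "(\<lambda>p. v ((fst p)(k := snd p))) \<in> borel_measurable (Mpow k \<Otimes>\<^sub>M M)"
    "(\<lambda>p. v ((fst p)(k := t0))) \<in> borel_measurable (Mpow k \<Otimes>\<^sub>M M)"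
    using measurable_compose[OF measurable_fun_upd_pair v] measurable_compose[OF measurable_fst v_t0]
    by (simp_all add: comp_def)
  then have "Measurable.pred (Mpow k \<Otimes>\<^sub>M M) (\<lambda>p. v ((fst p)(k := snd p)) = v ((fst p)(k := t0)))"
    unfolding pred_def by (rule borel_measurable_eq)
  then have "AE w in Mpow k. AE t in M. v (w(k := t)) = v (w(k := t0))"
    using eq P.AE_commute by (simp add: pred_def)
  then have "AE w in Mpow k. AE t in M. v (w(k := t)) = v ((restrict (w(k := t)) {..<k})(k := t0))"
    using AE_space by eventually_elim (simp add: restrict_eq)
  moreover have "(\<lambda>y. restrict y {..<k}) \<in> measurable (Mpow (Suc k)) (Mpow k)"
    by (rule measurable_restrict_subset) auto
  then have "(\<lambda>y. v ((restrict y {..<k})(k := t0))) \<in> borel_measurable (Mpow (Suc k))"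
    using v_t0 by (rule measurable_compose)
  then have "Measurable.pred (Mpow (Suc k)) (\<lambda>y. v y = v ((restrict y {..<k})(k := t0)))"
    unfolding pred_def using v by (rule borel_measurable_eq[rotated])
  ultimately show ?thesis by (simp add: AE_Mpow_Suc_iff)
qed

definition subtuple_sums_injective :: "nat \<Rightarrow> bool" where
  "subtuple_sums_injective k \<longleftrightarrow> (\<forall>n a v. k \<le> n \<longrightarrow> (\<forall>S\<in>ksubsets n k. 0 < a S)
     \<longrightarrow> v \<in> borel_measurable (Mpow k) \<longrightarrow> (AE x in Mpow n. subtuple_sum n k a v x = 0)
     \<longrightarrow> (AE y in Mpow k. v y = 0))"

lemma subtuple_sums_injectiveD:
  assumes "subtuple_sums_injective k" "k \<le> n" "\<forall>S\<in>ksubsets n k. 0 < a S"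
    "v \<in> borel_measurable (Mpow k)" "AE x in Mpow n. subtuple_sum n k a v x = 0"
  shows "AE y in Mpow k. v y = 0"
  using assms unfolding subtuple_sums_injective_def by blast

lemma subtuple_sums_injective_0: "subtuple_sums_injective 0"
  unfolding subtuple_sums_injective_def
proof (intro allI impI)
  fix n a v
  assume a: "\<forall>S\<in>ksubsets n 0. 0 < a S" and "AE x in Mpow n. subtuple_sum n 0 a v x = 0"
  then have "a {} * v (\<lambda>_. undefined) = 0"
    by (simp add: subtuple_sum_0 AE_const_iff[OF emeasure_space_Mpow_nonzero])
  moreover have "0 < a {}" using a by auto
  ultimately show "AE y in Mpow 0. v y = 0"
    using AE_space[of "Mpow 0"] by (auto simp: space_PiM elim!: eventually_mono)
qed

lemma AE_eq_fun_upd_restrict_if_subtuple_sum_AE_zero: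
  assumes IH: "subtuple_sums_injective k" and "k \<le> n" and a: "\<forall>S\<in>ksubsets (Suc n) (Suc k). 0 < a S"
    and v: "v \<in> borel_measurable (Mpow (Suc k))"
    and zero: "AE x in Mpow (Suc n). subtuple_sum (Suc n) (Suc k) a v x = 0"
  obtains t0 where "t0 \<in> space M" "AE y in Mpow (Suc k). v y = v ((restrict y {..<k})(k := t0))"
proof -
  interpret P: pair_sigma_finite "Mpow n" M by (rule pair_sigma_finite_Mpow)
  define a' where "a' T = a (insert n T)" for T
  have a': "\<forall>T\<in>ksubsets n k. 0 < a' T"
  proof
    fix T assume "T \<in> ksubsets n k"
    then have "insert n T \<in> ksubsets (Suc n) (Suc k)" by (intro insert_greater_in_ksubsets) auto
    then show "0 < a' T" using a by (simp add: a'_def)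
  qed
  define A where "A z = subtuple_sum n (Suc k) a v z" for z
  define B where "B t z = subtuple_sum n k a' (\<lambda>w. v (w(k := t))) z" for t z
  have split: "subtuple_sum (Suc n) (Suc k) a v (z(n := t)) = A z + B t z" for z t
    unfolding A_def B_def a'_def by (rule subtuple_sum_Suc_fun_upd)
  have pred: "Measurable.pred (Mpow (Suc n)) (\<lambda>x. subtuple_sum (Suc n) (Suc k) a v x = 0)"
    using measurable_subtuple_sum[OF v order_refl] by measurable
  then have "Measurable.pred (Mpow n \<Otimes>\<^sub>M M) (\<lambda>p. A (fst p) + B (snd p) (fst p) = 0)"
    using measurable_compose[OF measurable_fun_upd_pair pred] by (simp add: comp_def split)
  moreover have "AE z in Mpow n. AE t in M. A z + B t z = 0"
    using zero by (simp add: AE_Mpow_Suc_iff[OF pred] split)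
  ultimately have AE_t: "AE t in M. AE z in Mpow n. A z + B t z = 0"
    using P.AE_commute[of "\<lambda>z t. A z + B t z = 0"] by (simp add: pred_def)
  then obtain t0 where t0: "t0 \<in> space M" "AE z in Mpow n. A z + B t0 z = 0"
    using AE_imp_ex_in_space[OF emeasure_space_nonzero] by blast
  have v_fun_upd: "(\<lambda>w. v (w(k := t))) \<in> borel_measurable (Mpow k)" if "t \<in> space M" for t
    using measurable_compose[OF measurable_fun_upd_const[OF that] v] by (simp add: comp_def)
  \<comment> \<open>Subtracting the identities for \<open>t\<close> and \<open>t0\<close> eliminates \<open>A\<close>.\<close>
  have "AE t in M. AE w in Mpow k. v (w(k := t)) - v (w(k := t0)) = 0"
    using AE_t AE_space
  proof eventually_elim
    case (elim t)
    have "AE z in Mpow n. subtuple_sum n k a' (\<lambda>w. v (w(k := t)) - v (w(k := t0))) z = 0"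
      using elim(1) t0(2) by eventually_elim (unfold subtuple_sum_diff B_def, linarith)
    moreover have "(\<lambda>w. v (w(k := t)) - v (w(k := t0))) \<in> borel_measurable (Mpow k)"
      using v_fun_upd[OF elim(2)] v_fun_upd[OF t0(1)] by measurable
    ultimately show ?case by (rule subtuple_sums_injectiveD[OF IH \<open>k \<le> n\<close> a', rotated])
  qed
  then show ?thesis using that[OF t0(1)] AE_eq_fun_upd_restrict[OF v t0(1)] by simp
qed

lemma AE_subtuple_sum_restrict_lessThan_zero:
  assumes w: "w \<in> borel_measurable (Mpow k)"
    and zero: "AE x in Mpow (Suc n). subtuple_sum (Suc n) (Suc k) a (\<lambda>y. w (restrict y {..<k})) x = 0"
  shows "AE z in Mpow n. subtuple_sum n k (\<lambda>R. \<Sum>j | j < Suc n \<and> (\<forall>r\<in>R. r < j). a (insert j R)) w z = 0"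
    (is "AE z in Mpow n. subtuple_sum n k ?b w z = 0")
proof -
  have "Measurable.pred (Mpow (Suc n)) (\<lambda>x. subtuple_sum n k ?b w x = 0)"
    using measurable_subtuple_sum[OF w, of n "Suc n" ?b] by measurable
  moreover have "AE x in Mpow (Suc n). subtuple_sum n k ?b w x = 0"
    using zero by (simp add: subtuple_sum_restrict_lessThan)
  ultimately have "AE z in Mpow n. AE t in M. subtuple_sum n k ?b w (z(n := t)) = 0"
    by (simp add: AE_Mpow_Suc_iff)
  then show ?thesis
    by (simp add: subtuple_sum_fun_upd_out AE_const_iff[OF emeasure_space_nonzero])
qed

lemma subtuple_sums_injective_Suc:
  assumes IH: "subtuple_sums_injective k"
  shows "subtuple_sums_injective (Suc k)"
  unfolding subtuple_sums_injective_def
proof (intro allI impI)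
  fix n a v
  assume "Suc k \<le> n" and a: "\<forall>S\<in>ksubsets n (Suc k). 0 < a S"
    and v: "v \<in> borel_measurable (Mpow (Suc k))"
    and zero: "AE x in Mpow n. subtuple_sum n (Suc k) a v x = 0"
  then obtain n' where n: "n = Suc n'" and "k \<le> n'" by (cases n) auto
  obtain t0 where t0: "t0 \<in> space M"
    and v_t0: "AE y in Mpow (Suc k). v y = v ((restrict y {..<k})(k := t0))"
    by (rule AE_eq_fun_upd_restrict_if_subtuple_sum_AE_zero
        [OF IH \<open>k \<le> n'\<close> a[unfolded n] v zero[unfolded n]])
  define w where "w z = v (z(k := t0))" for z
  have v_eq: "AE y in Mpow (Suc k). v y = w (restrict y {..<k})" using v_t0 by (simp add: w_def)
  have w: "w \<in> borel_measurable (Mpow k)"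
    unfolding w_def using measurable_compose[OF measurable_fun_upd_const[OF t0] v]
    by (simp add: comp_def)
  have "AE x in Mpow n. \<forall>S\<in>ksubsets n (Suc k). v (subtuple S x) = w (restrict (subtuple S x) {..<k})"
    by (rule AE_all_subtuples[OF v_eq])
  then have "AE x in Mpow n. subtuple_sum n (Suc k) a (\<lambda>y. w (restrict y {..<k})) x = 0"
    using zero unfolding subtuple_sum_def by eventually_elim (metis (no_types, lifting) sum.cong)
  then have "AE z in Mpow n'.
      subtuple_sum n' k (\<lambda>R. \<Sum>j | j < Suc n' \<and> (\<forall>r\<in>R. r < j). a (insert j R)) w z = 0"
    unfolding n by (rule AE_subtuple_sum_restrict_lessThan_zero[OF w])
  moreover have "\<forall>R\<in>ksubsets n' k. 0 < (\<Sum>j | j < Suc n' \<and> (\<forall>r\<in>R. r < j). a (insert j R))"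
  proof
    fix R assume "R \<in> ksubsets n' k"
    then show "0 < (\<Sum>j | j < Suc n' \<and> (\<forall>r\<in>R. r < j). a (insert j R))"
      by (rule sum_insert_greater_pos[OF a[unfolded n]])
  qed
  ultimately have "AE z in Mpow k. w z = 0"
    by (intro subtuple_sums_injectiveD[OF IH \<open>k \<le> n'\<close> _ w])
  then have "AE y in Mpow (card {..<k}). w y = 0" by (simp only: card_lessThan)
  then have "AE y in Mpow (Suc k). w (subtuple {..<k} y) = 0" by (rule AE_subtuple[rotated]) auto
  then show "AE y in Mpow (Suc k). v y = 0"
    using v_eq by eventually_elim (simp add: subtuple_lessThan)
qed

lemma subtuple_sums_injective: "subtuple_sums_injective k"
  by (induction k) (auto intro: subtuple_sums_injective_0 subtuple_sums_injective_Suc)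

lemma AE_G_zero_iff:
  assumes u: "u \<in> borel_measurable (prodM M m)" and "m \<le> N"
  shows "(AE x in prodM M N. G N m u x = 0) \<longleftrightarrow> (AE y in prodM M m. u y = 0)"
proof -
  have weights: "\<forall>S\<in>ksubsets N m. 0 < 1 / real (N choose m)" using \<open>m \<le> N\<close> by simp
  obtain f where f: "f \<in> borel_measurable (Mpow m)" "AE y in Mpow m. u y = f y"
    using completion_ex_borel_measurable_real u unfolding prodM_def by blast
  have G_eq: "AE x in Mpow N. G N m u x = G N m f x"
    using AE_all_subtuples[OF f(2)] by eventually_elim (simp add: G_eq_subtuple_sum subtuple_sum_def)
  show ?thesis
    unfolding prodM_def AE_completion_iff
  proof
    assume "AE x in Mpow N. G N m u x = 0"
    then have "AE x in Mpow N. subtuple_sum N m (\<lambda>_. 1 / real (N choose m)) f x = 0"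
      using G_eq by eventually_elim (simp add: G_eq_subtuple_sum)
    then have "AE y in Mpow m. f y = 0"
      by (rule subtuple_sums_injectiveD[OF subtuple_sums_injective \<open>m \<le> N\<close> weights f(1)])
    then show "AE y in Mpow m. u y = 0" using f(2) by eventually_elim simp
  next
    assume "AE y in Mpow m. u y = 0"
    then have "AE x in Mpow N. \<forall>S\<in>ksubsets N m. u (subtuple S x) = 0" by (rule AE_all_subtuples)
    then show "AE x in Mpow N. G N m u x = 0"
      by eventually_elim (simp add: G_eq_subtuple_sum subtuple_sum_def)
  qed
qed

end

theorem corollary1:
  fixes M :: "'a measure" and N m :: nat and u :: "(nat \<Rightarrow> 'a) \<Rightarrow> real"
  assumes "complete_measure M"
    and "sigma_finite_measure M"
    and "emeasure M (space M) \<noteq> 0"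
    and "1 \<le> m" and "m \<le> N"
    and "u \<in> borel_measurable (prodM M m)"
  shows "((AE x in prodM M N. G N m u x = 0) \<longleftrightarrow> (AE y in prodM M m. u y = 0))
    \<and> (\<forall>v \<in> borel_measurable (prodM M m).
          (AE x in prodM M N. G N m u x = G N m v x) \<longrightarrow> (AE y in prodM M m. u y = v y))"
proof -
  interpret nonnull_sigma_finite_measure M
    using assms(2,3)
    by (simp add: nonnull_sigma_finite_measure_def nonnull_sigma_finite_measure_axioms_def)
  show ?thesis
  proof (intro conjI ballI impI)
    show "(AE x in prodM M N. G N m u x = 0) \<longleftrightarrow> (AE y in prodM M m. u y = 0)"
      by (rule AE_G_zero_iff[OF assms(6,5)])
  next
    fix v :: "(nat \<Rightarrow> 'a) \<Rightarrow> real" assume v: "v \<in> borel_measurable (prodM M m)"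
    assume "AE x in prodM M N. G N m u x = G N m v x"
    then have "AE x in prodM M N. G N m (\<lambda>y. u y - v y) x = 0"
      by eventually_elim (simp add: G_eq_subtuple_sum subtuple_sum_diff)
    moreover have "(\<lambda>y. u y - v y) \<in> borel_measurable (prodM M m)" using assms(6) v by measurable
    ultimately show "AE y in prodM M m. u y = v y"
      using AE_G_zero_iff[OF _ assms(5)] by (auto elim: eventually_mono)
  qed
qed

end
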